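(* Let $\mathbb W=(W,I,\preccurlyeq,\circ,{}^\sim,{}^-)$ be a DInFL-frame and let $\mathsf{Up}(W,\preccurlyeq)$ be the set of all upsets of $(W,\preccurlyeq)$. For $U\in\mathsf{Up}(W,\preccurlyeq)$ define ${\sim}U=\{w\in W\mid w^-\notin U\}$ and $-U=\{w\in W\mid w^\sim\notin U\}$. Then $\mathsf{Up}(W,\preccurlyeq)$ is closed under $\cap,\cup,\circ,{\sim},-$, contains $I$, and $\mathbb W^+=(\mathsf{Up}(W,\preccurlyeq),\cap,\cup,\circ,I,\sim,-)$ is a distributive InFL-algebra (DInFL-algebra).
   Context: For a set $W$ and a map $\circ:W\times W\to\mathcal P(W)$, extend $\circ$ to subsets by $U\circ V=\bigcup\{a\circ b\mid a\in U,\ b\in V\}$, with $x\circ V=\{x\}\circ V$ and $U\circ y=U\circ\{y\}$. We write $x^{\sim-}$ for $(x^\sim)^-$, etc. A DInFL-frame is a tuple $\mathbb W=(W,I,\preccurlyeq,\circ,{}^\sim,{}^-)$ where $W$ is a set, $I\subseteq W$, $\preccurlyeq$ is a partial order on $W$, $\circ:W\times W\to\mathcal P(W)$, and ${}^\sim,{}^-:W\to W$ are functions, such that for all $u,v,x,y,z\in W$: (F1) $x\preccurlyeq y$ iff $y\in I\circ x$ iff $y\in x\circ I$; (F2) if $x\preccurlyeq y$ and $x\in I$ then $y\in I$; (F3) if $x\preccurlyeq y$ and $x\in u\circ v$ then $y\in u\circ v$; (F4) $(x\circ y)\circ z=x\circ(y\circ z)$; (F5) $z^\sim\in x\circ y$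 iff $y^-\in z\circ x$; (F6) $x^{\sim-}\preccurlyeq x$ and $x^{-\sim}\preccurlyeq x$. An InFL-algebra is a structure $(A,\wedge,\vee,\cdot,1,\sim,-)$ with $(A,\wedge,\vee)$ a lattice, $(A,\cdot,1)$ a monoid, and for all $a,b,c$: $a\cdot b\leqslant c\iff a\leqslant -(b\cdot{\sim}c)\iff b\leqslant{\sim}(-c\cdot a)$. A DInFL-algebra is an InFL-algebra whose lattice reduct is distributive. *)

theory Defs
  imports Main
begin

text \<open>Frames are given relative to a carrier set W (a subset of a type 'a).
  The ternary relation is a map comp :: 'a => 'a => 'a set.\<close>

definition setcomp :: "('a \<Rightarrow> 'a \<Rightarrow> 'a set) \<Rightarrow> 'a set \<Rightarrow> 'a set \<Rightarrow> 'a set" where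
  "setcomp c U V = (\<Union>a\<in>U. \<Union>b\<in>V. c a b)"

definition partial_order_on_set :: "'a set \<Rightarrow> ('a \<Rightarrow> 'a \<Rightarrow> bool) \<Rightarrow> bool" where
  "partial_order_on_set W le \<longleftrightarrow>
     (\<forall>x\<in>W. le x x) \<and>
     (\<forall>x\<in>W. \<forall>y\<in>W. le x y \<and> le y x \<longrightarrow> x = y) \<and>
     (\<forall>x\<in>W. \<forall>y\<in>W. \<forall>z\<in>W. le x y \<and> le y z \<longrightarrow> le x z)"

definition DInFL_frame ::
  "'a set \<Rightarrow> 'a set \<Rightarrow> ('a \<Rightarrow> 'a \<Rightarrow> bool) \<Rightarrow> ('a \<Rightarrow> 'a \<Rightarrow> 'a set)
     \<Rightarrow> ('a \<Rightarrow> 'a) \<Rightarrow> ('a \<Rightarrow> 'a) \<Rightarrow> bool" where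
  "DInFL_frame W I le c tld mns \<longleftrightarrow>
     I \<subseteq> W \<and> partial_order_on_set W le \<and>
     (\<forall>x\<in>W. \<forall>y\<in>W. c x y \<subseteq> W) \<and>
     (\<forall>x\<in>W. tld x \<in> W) \<and> (\<forall>x\<in>W. mns x \<in> W) \<and>
     \<comment> \<open>F1\<close>
     (\<forall>x\<in>W. \<forall>y\<in>W. (le x y \<longleftrightarrow> y \<in> setcomp c I {x}) \<and>
                      (y \<in> setcomp c I {x} \<longleftrightarrow> y \<in> setcomp c {x} I)) \<and>
     \<comment> \<open>F2\<close>
     (\<forall>x\<in>W. \<forall>y\<in>W. le x y \<and> x \<in> I \<longrightarrow> y \<in> I) \<and>
     \<comment> \<open>F3\<close>
     (\<forall>u\<in>W. \<forall>v\<in>W. \<forall>x\<in>W. \<forall>y\<in>W. le x y \<and> x \<in> c u v \<longrightarrow> y \<in> c u v) \<and>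
     \<comment> \<open>F4\<close>
     (\<forall>x\<in>W. \<forall>y\<in>W. \<forall>z\<in>W.
        setcomp c (setcomp c {x} {y}) {z} = setcomp c {x} (setcomp c {y} {z})) \<and>
     \<comment> \<open>F5\<close>
     (\<forall>x\<in>W. \<forall>y\<in>W. \<forall>z\<in>W. tld z \<in> c x y \<longleftrightarrow> mns y \<in> c z x) \<and>
     \<comment> \<open>F6\<close>
     (\<forall>x\<in>W. le (mns (tld x)) x \<and> le (tld (mns x)) x)"

definition upsets :: "'a set \<Rightarrow> ('a \<Rightarrow> 'a \<Rightarrow> bool) \<Rightarrow> 'a set set" where
  "upsets W le = {U. U \<subseteq> W \<and> (\<forall>x\<in>U. \<forall>y\<in>W. le x y \<longrightarrow> y \<in> U)}"

definition up_tilde :: "'a set \<Rightarrow> ('a \<Rightarrow> 'a) \<Rightarrow> 'a set \<Rightarrow> 'a set" where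
  "up_tilde W mns U = {w\<in>W. mns w \<notin> U}"

definition up_minus :: "'a set \<Rightarrow> ('a \<Rightarrow> 'a) \<Rightarrow> 'a set \<Rightarrow> 'a set" where
  "up_minus W tld U = {w\<in>W. tld w \<notin> U}"

definition lattice_on :: "'b set \<Rightarrow> ('b \<Rightarrow> 'b \<Rightarrow> 'b) \<Rightarrow> ('b \<Rightarrow> 'b \<Rightarrow> 'b) \<Rightarrow> bool" where
  "lattice_on A meet join \<longleftrightarrow>
     (\<forall>a\<in>A. \<forall>b\<in>A. meet a b \<in> A \<and> join a b \<in> A) \<and>
     (\<forall>a\<in>A. \<forall>b\<in>A. meet a b = meet b a \<and> join a b = join b a) \<and>
     (\<forall>a\<in>A. \<forall>b\<in>A. \<forall>c\<in>A. meet (meet a b) c = meet a (meet b c) \<and>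
                            join (join a b) c = join a (join b c)) \<and>
     (\<forall>a\<in>A. \<forall>b\<in>A. meet a (join a b) = a \<and> join a (meet a b) = a)"

definition lat_le :: "('b \<Rightarrow> 'b \<Rightarrow> 'b) \<Rightarrow> 'b \<Rightarrow> 'b \<Rightarrow> bool" where
  "lat_le meet a b \<longleftrightarrow> meet a b = a"

definition monoid_on :: "'b set \<Rightarrow> ('b \<Rightarrow> 'b \<Rightarrow> 'b) \<Rightarrow> 'b \<Rightarrow> bool" where
  "monoid_on A dot one \<longleftrightarrow>
     one \<in> A \<and> (\<forall>a\<in>A. \<forall>b\<in>A. dot a b \<in> A) \<and>
     (\<forall>a\<in>A. \<forall>b\<in>A. \<forall>c\<in>A. dot (dot a b) c = dot a (dot b c)) \<and>
     (\<forall>a\<in>A. dot one a = a \<and> dot a one = a)"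

definition InFL_algebra ::
  "'b set \<Rightarrow> ('b \<Rightarrow> 'b \<Rightarrow> 'b) \<Rightarrow> ('b \<Rightarrow> 'b \<Rightarrow> 'b) \<Rightarrow> ('b \<Rightarrow> 'b \<Rightarrow> 'b) \<Rightarrow> 'b
     \<Rightarrow> ('b \<Rightarrow> 'b) \<Rightarrow> ('b \<Rightarrow> 'b) \<Rightarrow> bool" where
  "InFL_algebra A meet join dot one tld mns \<longleftrightarrow>
     lattice_on A meet join \<and> monoid_on A dot one \<and>
     (\<forall>a\<in>A. tld a \<in> A \<and> mns a \<in> A) \<and>
     (\<forall>a\<in>A. \<forall>b\<in>A. \<forall>c\<in>A.
        (lat_le meet (dot a b) c \<longleftrightarrow> lat_le meet a (mns (dot b (tld c)))) \<and>
        (lat_le meet a (mns (dot b (tld c))) \<longleftrightarrow> lat_le meet b (tld (dot (mns c) a))))"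

definition DInFL_algebra ::
  "'b set \<Rightarrow> ('b \<Rightarrow> 'b \<Rightarrow> 'b) \<Rightarrow> ('b \<Rightarrow> 'b \<Rightarrow> 'b) \<Rightarrow> ('b \<Rightarrow> 'b \<Rightarrow> 'b) \<Rightarrow> 'b
     \<Rightarrow> ('b \<Rightarrow> 'b) \<Rightarrow> ('b \<Rightarrow> 'b) \<Rightarrow> bool" where
  "DInFL_algebra A meet join dot one tld mns \<longleftrightarrow>
     InFL_algebra A meet join dot one tld mns \<and>
     (\<forall>a\<in>A. \<forall>b\<in>A. \<forall>c\<in>A. meet a (join b c) = join (meet a b) (meet a c))"

end

theory Submission
  imports Defs
begin

text \<open>The frame axioms F1, F5 and F6 make \<open>\<^sup>\<sim>\<close> and \<open>\<^sup>-\<close> mutually inverse order-reversing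
  bijections of \<open>W\<close>.  Hence \<open>\<sim>U\<close> and \<open>-U\<close> are upsets, and since the negations are
  surjective, F5 turns both \<open>U \<subseteq> -(V \<circ> \<sim>Z)\<close> and \<open>V \<subseteq> \<sim>(-Z \<circ> U)\<close> into
  \<open>u \<circ> v \<subseteq> Z\<close> for all \<open>u \<in> U\<close>, \<open>v \<in> V\<close>, i.e. into \<open>U \<circ> V \<subseteq> Z\<close>.  The unit laws
  for \<open>I\<close> are F1 lifted to upsets, associativity is F4 lifted pointwise, and the lattice
  reduct is a lattice of sets, hence distributive.\<close>

lemma setcomp_singletons [simp]: "setcomp c {x} {y} = c x y"
  by (simp add: setcomp_def)

lemma setcomp_assoc:
  assumes "\<And>x y z. x \<in> U \<Longrightarrow> y \<in> V \<Longrightarrow> z \<in> Z \<Longrightarrow>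
             setcomp c (c x y) {z} = setcomp c {x} (c y z)"
  shows "setcomp c (setcomp c U V) Z = setcomp c U (setcomp c V Z)"
proof -
  have "setcomp c (setcomp c U V) Z = (\<Union>x\<in>U. \<Union>y\<in>V. \<Union>z\<in>Z. setcomp c (c x y) {z})"
    unfolding setcomp_def by blast
  also have "\<dots> = (\<Union>x\<in>U. \<Union>y\<in>V. \<Union>z\<in>Z. setcomp c {x} (c y z))"
    using assms by simp
  also have "\<dots> = setcomp c U (setcomp c V Z)"
    unfolding setcomp_def by blast
  finally show ?thesis .
qed

lemma lat_le_Int_iff: "lat_le (\<inter>) A B \<longleftrightarrow> A \<subseteq> B"
  unfolding lat_le_def by blast

lemma lattice_on_Int_Un:
  assumes "\<And>A B. A \<in> S \<Longrightarrow> B \<in> S \<Longrightarrow> A \<inter> B \<in> S \<and> A \<union> B \<in> S"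
  shows "lattice_on S (\<inter>) (\<union>)"
  using assms unfolding lattice_on_def by blast

lemma subset_iff_via_surjection:
  assumes "f ` W = W" "A \<subseteq> W"
  shows "A \<subseteq> Z \<longleftrightarrow> (\<forall>z\<in>W. f z \<in> A \<longrightarrow> f z \<in> Z)"
  using assms by (metis imageE imageI subset_iff)

locale DInFL_frame_on =
  fixes W I :: "'a set" and le :: "'a \<Rightarrow> 'a \<Rightarrow> bool"
    and c :: "'a \<Rightarrow> 'a \<Rightarrow> 'a set" and tld mns :: "'a \<Rightarrow> 'a"
  assumes frame: "DInFL_frame W I le c tld mns"
begin

lemma frame_axioms:
  shows I_subset: "I \<subseteq> W"
    and partial_order: "partial_order_on_set W le"
    and comp_closed_ax: "\<forall>x\<in>W. \<forall>y\<in>W. c x y \<subseteq> W"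
    and tld_closed_ax: "\<forall>x\<in>W. tld x \<in> W"
    and mns_closed_ax: "\<forall>x\<in>W. mns x \<in> W"
    and F1: "\<forall>x\<in>W. \<forall>y\<in>W. (le x y \<longleftrightarrow> y \<in> setcomp c I {x}) \<and>
                          (y \<in> setcomp c I {x} \<longleftrightarrow> y \<in> setcomp c {x} I)"
    and F2: "\<forall>x\<in>W. \<forall>y\<in>W. le x y \<and> x \<in> I \<longrightarrow> y \<in> I"
    and F3: "\<forall>u\<in>W. \<forall>v\<in>W. \<forall>x\<in>W. \<forall>y\<in>W. le x y \<and> x \<in> c u v \<longrightarrow> y \<in> c u v"
    and F4: "\<forall>x\<in>W. \<forall>y\<in>W. \<forall>z\<in>W.
               setcomp c (setcomp c {x} {y}) {z} = setcomp c {x} (setcomp c {y} {z})"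
    and F5: "\<forall>x\<in>W. \<forall>y\<in>W. \<forall>z\<in>W. tld z \<in> c x y \<longleftrightarrow> mns y \<in> c z x"
    and F6: "\<forall>x\<in>W. le (mns (tld x)) x \<and> le (tld (mns x)) x"
  using frame unfolding DInFL_frame_def by - (elim conjE, assumption)+

lemma le_refl: "x \<in> W \<Longrightarrow> le x x"
  using partial_order unfolding partial_order_on_set_def by blast

lemma le_antisym: "x \<in> W \<Longrightarrow> y \<in> W \<Longrightarrow> le x y \<Longrightarrow> le y x \<Longrightarrow> x = y"
  using partial_order unfolding partial_order_on_set_def by blast

lemma comp_closed: "x \<in> W \<Longrightarrow> y \<in> W \<Longrightarrow> c x y \<subseteq> W"
  using comp_closed_ax by blast

lemma tld_closed: "x \<in> W \<Longrightarrow> tld x \<in> W"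
  using tld_closed_ax by blast

lemma mns_closed: "x \<in> W \<Longrightarrow> mns x \<in> W"
  using mns_closed_ax by blast

lemma le_iff_left_unit: "x \<in> W \<Longrightarrow> y \<in> W \<Longrightarrow> le x y \<longleftrightarrow> (\<exists>i\<in>I. y \<in> c i x)"
  using F1 unfolding setcomp_def by blast

lemma le_iff_right_unit: "x \<in> W \<Longrightarrow> y \<in> W \<Longrightarrow> le x y \<longleftrightarrow> (\<exists>i\<in>I. y \<in> c x i)"
  using F1 unfolding setcomp_def by blast

lemma I_up_closed: "x \<in> I \<Longrightarrow> y \<in> W \<Longrightarrow> le x y \<Longrightarrow> y \<in> I"
  using F2 I_subset by blast

lemma comp_up_closed:
  "u \<in> W \<Longrightarrow> v \<in> W \<Longrightarrow> x \<in> c u v \<Longrightarrow> y \<in> W \<Longrightarrow> le x y \<Longrightarrow> y \<in> c u v"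
  using F3 comp_closed by blast

lemma comp_assoc_points:
  "x \<in> W \<Longrightarrow> y \<in> W \<Longrightarrow> z \<in> W \<Longrightarrow> setcomp c (c x y) {z} = setcomp c {x} (c y z)"
  using F4 by simp

lemma tld_mem_comp_iff:
  "x \<in> W \<Longrightarrow> y \<in> W \<Longrightarrow> z \<in> W \<Longrightarrow> tld z \<in> c x y \<longleftrightarrow> mns y \<in> c z x"
  using F5 by blast

lemma mns_tld_le: "x \<in> W \<Longrightarrow> le (mns (tld x)) x"
  using F6 by blast

lemma tld_mns_le: "x \<in> W \<Longrightarrow> le (tld (mns x)) x"
  using F6 by blast

lemma tld_mns [simp]:
  assumes y: "y \<in> W"
  shows "tld (mns y) = y"
proof -
  obtain i where i: "i \<in> I" "mns y \<in> c (mns y) i"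
    using le_iff_right_unit[of "mns y" "mns y"] le_refl mns_closed y by blast
  then have "tld (mns y) \<in> c i y"
    using tld_mem_comp_iff[of i y "mns y"] I_subset mns_closed y by blast
  then have "le y (tld (mns y))"
    using le_iff_left_unit[of y "tld (mns y)"] i y tld_closed mns_closed by blast
  then show ?thesis
    using le_antisym[of "tld (mns y)" y] tld_mns_le tld_closed mns_closed y by blast
qed

lemma mns_tld [simp]:
  assumes y: "y \<in> W"
  shows "mns (tld y) = y"
proof -
  obtain i where i: "i \<in> I" "tld y \<in> c i (tld y)"
    using le_iff_left_unit[of "tld y" "tld y"] le_refl tld_closed y by blast
  then have "mns (tld y) \<in> c y i"
    using tld_mem_comp_iff[of i "tld y" y] I_subset tld_closed y by blast
  then have "le y (mns (tld y))"
    using le_iff_right_unit[of y "mns (tld y)"] i y tld_closed mns_closed by blast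
  then show ?thesis
    using le_antisym[of "mns (tld y)" y] mns_tld_le tld_closed mns_closed y by blast
qed

lemma image_tld: "tld ` W = W"
  using tld_closed mns_closed by (force intro: image_eqI[where x = "mns _"])

lemma image_mns: "mns ` W = W"
  using tld_closed mns_closed by (force intro: image_eqI[where x = "tld _"])

lemma mns_antimono:
  assumes "x \<in> W" "y \<in> W" "le x y"
  shows "le (mns y) (mns x)"
proof -
  obtain i where i: "i \<in> I" "y \<in> c i x"
    using le_iff_left_unit assms by blast
  then have "mns x \<in> c (mns y) i"
    using tld_mem_comp_iff[of i x "mns y"] I_subset mns_closed assms by auto
  then show ?thesis
    using le_iff_right_unit[of "mns y" "mns x"] i mns_closed assms by blast
qed

lemma tld_antimono:
  assumes "x \<in> W" "y \<in> W" "le x y"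
  shows "le (tld y) (tld x)"
proof -
  obtain i where i: "i \<in> I" "y \<in> c x i"
    using le_iff_right_unit assms by blast
  then have "tld x \<in> c i (tld y)"
    using tld_mem_comp_iff[of i "tld y" x] I_subset tld_closed assms by auto
  then show ?thesis
    using le_iff_left_unit[of "tld y" "tld x"] i tld_closed assms by blast
qed

abbreviation Up :: "'a set set" where
  "Up \<equiv> upsets W le"

lemma upsets_subset: "U \<in> Up \<Longrightarrow> U \<subseteq> W"
  unfolding upsets_def by blast

lemma upsets_up_closed: "U \<in> Up \<Longrightarrow> x \<in> U \<Longrightarrow> y \<in> W \<Longrightarrow> le x y \<Longrightarrow> y \<in> U"
  unfolding upsets_def by blast

lemma Int_upsets: "U \<in> Up \<Longrightarrow> V \<in> Up \<Longrightarrow> U \<inter> V \<in> Up"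
  unfolding upsets_def by blast

lemma Un_upsets: "U \<in> Up \<Longrightarrow> V \<in> Up \<Longrightarrow> U \<union> V \<in> Up"
  unfolding upsets_def by blast

lemma setcomp_upsets:
  assumes "U \<in> Up" "V \<in> Up"
  shows "setcomp c U V \<in> Up"
proof -
  have UV: "U \<subseteq> W" "V \<subseteq> W"
    using assms upsets_subset by auto
  then have "setcomp c U V \<subseteq> W"
    unfolding setcomp_def using comp_closed by blast
  moreover have "y \<in> setcomp c U V"
    if x: "x \<in> setcomp c U V" and y: "y \<in> W" "le x y" for x y
  proof -
    obtain u v where uv: "u \<in> U" "v \<in> V" "x \<in> c u v"
      using x unfolding setcomp_def by blast
    then have "y \<in> c u v"
      using comp_up_closed[of u v x y] y UV by blast
    then show ?thesis
      using uv unfolding setcomp_def by blast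
  qed
  ultimately show ?thesis
    unfolding upsets_def by blast
qed

lemma up_tilde_upsets: "U \<in> Up \<Longrightarrow> up_tilde W mns U \<in> Up"
  unfolding upsets_def up_tilde_def using mns_antimono mns_closed by blast

lemma up_minus_upsets: "U \<in> Up \<Longrightarrow> up_minus W tld U \<in> Up"
  unfolding upsets_def up_minus_def using tld_antimono tld_closed by blast

lemma I_upsets: "I \<in> Up"
  unfolding upsets_def using I_subset I_up_closed by blast

lemma setcomp_I_left:
  assumes U: "U \<in> Up"
  shows "setcomp c I U = U"
proof
  show "setcomp c I U \<subseteq> U"
  proof
    fix y assume "y \<in> setcomp c I U"
    then obtain i x where ix: "i \<in> I" "x \<in> U" "y \<in> c i x"
      unfolding setcomp_def by blast
    then have "x \<in> W" "y \<in> W"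
      using U upsets_subset I_subset comp_closed by blast+
    then have "le x y"
      using le_iff_left_unit ix by blast
    then show "y \<in> U"
      using upsets_up_closed U ix \<open>y \<in> W\<close> by blast
  qed
  show "U \<subseteq> setcomp c I U"
  proof
    fix x assume x: "x \<in> U"
    then obtain i where "i \<in> I" "x \<in> c i x"
      using le_iff_left_unit le_refl U upsets_subset by blast
    then show "x \<in> setcomp c I U"
      using x unfolding setcomp_def by blast
  qed
qed

lemma setcomp_I_right:
  assumes U: "U \<in> Up"
  shows "setcomp c U I = U"
proof
  show "setcomp c U I \<subseteq> U"
  proof
    fix y assume "y \<in> setcomp c U I"
    then obtain i x where ix: "i \<in> I" "x \<in> U" "y \<in> c x i"
      unfolding setcomp_def by blast
    then have "x \<in> W" "y \<in> W"
      using U upsets_subset I_subset comp_closed by blast+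
    then have "le x y"
      using le_iff_right_unit ix by blast
    then show "y \<in> U"
      using upsets_up_closed U ix \<open>y \<in> W\<close> by blast
  qed
  show "U \<subseteq> setcomp c U I"
  proof
    fix x assume x: "x \<in> U"
    then obtain i where "i \<in> I" "x \<in> c x i"
      using le_iff_right_unit le_refl U upsets_subset by blast
    then show "x \<in> setcomp c U I"
      using x unfolding setcomp_def by blast
  qed
qed

lemma setcomp_assoc_on:
  "U \<subseteq> W \<Longrightarrow> V \<subseteq> W \<Longrightarrow> Z \<subseteq> W \<Longrightarrow>
    setcomp c (setcomp c U V) Z = setcomp c U (setcomp c V Z)"
  by (intro setcomp_assoc comp_assoc_points) auto

lemma monoid_on_upsets: "monoid_on Up (setcomp c) I"
  unfolding monoid_on_def
  by (simp add: I_upsets setcomp_upsets setcomp_I_left setcomp_I_right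
      setcomp_assoc_on upsets_subset)

lemma subset_up_minus_iff:
  assumes "U \<subseteq> W" "V \<subseteq> W"
  shows "U \<subseteq> up_minus W tld (setcomp c V (up_tilde W mns Z)) \<longleftrightarrow> setcomp c U V \<subseteq> Z"
proof -
  have "U \<subseteq> up_minus W tld (setcomp c V (up_tilde W mns Z)) \<longleftrightarrow>
      (\<forall>u\<in>U. \<forall>v\<in>V. \<forall>z\<in>W. tld u \<in> c v z \<longrightarrow> mns z \<in> Z)"
    using assms unfolding up_minus_def up_tilde_def setcomp_def by blast
  also have "\<dots> \<longleftrightarrow> (\<forall>u\<in>U. \<forall>v\<in>V. \<forall>z\<in>W. mns z \<in> c u v \<longrightarrow> mns z \<in> Z)"
    using tld_mem_comp_iff assms by blast
  also have "\<dots> \<longleftrightarrow> (\<forall>u\<in>U. \<forall>v\<in>V. c u v \<subseteq> Z)"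
  proof -
    have "(\<forall>z\<in>W. mns z \<in> c u v \<longrightarrow> mns z \<in> Z) \<longleftrightarrow> c u v \<subseteq> Z" if "u \<in> U" "v \<in> V" for u v
      using subset_iff_via_surjection[OF image_mns comp_closed] that assms by blast
    then show ?thesis
      by simp
  qed
  finally show ?thesis
    unfolding setcomp_def by blast
qed

lemma subset_up_tilde_iff:
  assumes "U \<subseteq> W" "V \<subseteq> W"
  shows "V \<subseteq> up_tilde W mns (setcomp c (up_minus W tld Z) U) \<longleftrightarrow> setcomp c U V \<subseteq> Z"
proof -
  have "V \<subseteq> up_tilde W mns (setcomp c (up_minus W tld Z) U) \<longleftrightarrow>
      (\<forall>u\<in>U. \<forall>v\<in>V. \<forall>z\<in>W. mns v \<in> c z u \<longrightarrow> tld z \<in> Z)"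
    using assms unfolding up_minus_def up_tilde_def setcomp_def by blast
  also have "\<dots> \<longleftrightarrow> (\<forall>u\<in>U. \<forall>v\<in>V. \<forall>z\<in>W. tld z \<in> c u v \<longrightarrow> tld z \<in> Z)"
    using tld_mem_comp_iff assms by blast
  also have "\<dots> \<longleftrightarrow> (\<forall>u\<in>U. \<forall>v\<in>V. c u v \<subseteq> Z)"
  proof -
    have "(\<forall>z\<in>W. tld z \<in> c u v \<longrightarrow> tld z \<in> Z) \<longleftrightarrow> c u v \<subseteq> Z" if "u \<in> U" "v \<in> V" for u v
      using subset_iff_via_surjection[OF image_tld comp_closed] that assms by blast
    then show ?thesis
      by simp
  qed
  finally show ?thesis
    unfolding setcomp_def by blast
qed

lemma DInFL_algebra_upsets:
  "DInFL_algebra Up (\<inter>) (\<union>) (setcomp c) I (up_tilde W mns) (up_minus W tld)"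
proof -
  have "lattice_on Up (\<inter>) (\<union>)"
    by (rule lattice_on_Int_Un) (simp add: Int_upsets Un_upsets)
  then show ?thesis
    unfolding DInFL_algebra_def InFL_algebra_def lat_le_Int_iff
    by (simp add: monoid_on_upsets up_tilde_upsets up_minus_upsets upsets_subset
        subset_up_minus_iff subset_up_tilde_iff Int_Un_distrib)
qed

end

theorem mainTheorem4:
  fixes W I :: "'a set" and le :: "'a \<Rightarrow> 'a \<Rightarrow> bool"
    and c :: "'a \<Rightarrow> 'a \<Rightarrow> 'a set" and tld mns :: "'a \<Rightarrow> 'a"
  assumes "DInFL_frame W I le c tld mns"
  shows "(\<forall>U\<in>upsets W le. \<forall>V\<in>upsets W le.
            U \<inter> V \<in> upsets W le \<and> U \<union> V \<in> upsets W le \<and> setcomp c U V \<in> upsets W le)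
       \<and> (\<forall>U\<in>upsets W le. up_tilde W mns U \<in> upsets W le \<and> up_minus W tld U \<in> upsets W le)
       \<and> I \<in> upsets W le
       \<and> DInFL_algebra (upsets W le) (\<inter>) (\<union>) (setcomp c) I (up_tilde W mns) (up_minus W tld)"
proof -
  interpret DInFL_frame_on W I le c tld mns
    using assms by unfold_locales
  show ?thesis
    using Int_upsets Un_upsets setcomp_upsets up_tilde_upsets up_minus_upsets I_upsets
          DInFL_algebra_upsets
    by simp
qed

end
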